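(* Fix $m\ge1$ and $\omega\in\mathbb Z\setminus\{0\}$. There exist constants $c_\omega>0$ and $C_{m,\omega}>0$ such that for every smooth closed immersed planar curve $\gamma$ of length $1$ with turning number $\omega$, $$\int_\gamma F_0^2\,ds\ \ge\ c_\omega\,\mathcal P-C_{m,\omega}E_m[\gamma]^2,$$ where $\kappa=2\pi\omega$, $F_0:=(-1)^{m+1}(k_{s^{2m+2}}+\kappa^2k_{s^{2m}})$ and $\mathcal P:=\int_\gamma k_{s^{2m+2}}^2\,ds$.
   Context: $s$ arclength, $k$ signed curvature, $k_{s^j}$ its $j$-th arclength derivative, $E_m[\gamma]=\frac12\int_\gamma k_{s^m}^2ds$, turning number $\frac1{2\pi}\int_\gamma k\,ds$. *)

theory Defs
  imports "HOL-Analysis.Analysis"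
begin

text \<open>Planar curves are maps real \<Rightarrow> complex (identifying R^2 with C).
  vd f is the derivative of a real-parametrised curve.\<close>

definition vd :: "(real \<Rightarrow> complex) \<Rightarrow> real \<Rightarrow> complex" where
  "vd f = (\<lambda>t. vector_derivative f (at t))"

definition smooth_curve :: "(real \<Rightarrow> complex) \<Rightarrow> bool" where
  "smooth_curve g \<longleftrightarrow> (\<forall>n t. ((vd ^^ n) g) differentiable (at t))"

text \<open>A smooth closed immersed planar curve of length 1, parametrised by
  arclength s on [0,1] (extended 1-periodically): smooth, 1-periodic, unit speed.\<close>
definition closed_unit_length_curve :: "(real \<Rightarrow> complex) \<Rightarrow> bool" where
  "closed_unit_length_curve g \<longleftrightarrow>
     smooth_curve g \<and> (\<forall>t. g (t + 1) = g t) \<and> (\<forall>t. norm (vd g t) = 1)"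

text \<open>Signed curvature k = (x'y'' - y'x'')/|g'|^3 (= Im(conj g' * g'')/|g'|^3).\<close>
definition curvature :: "(real \<Rightarrow> complex) \<Rightarrow> real \<Rightarrow> real" where
  "curvature g t = Im (cnj (vd g t) * vd (vd g) t) / norm (vd g t) ^ 3"

definition kds :: "(real \<Rightarrow> complex) \<Rightarrow> nat \<Rightarrow> real \<Rightarrow> real" where
  "kds g j = (deriv ^^ j) (curvature g)"

definition turning_number :: "(real \<Rightarrow> complex) \<Rightarrow> real" where
  "turning_number g = integral {0..1} (curvature g) / (2 * pi)"

definition energy :: "nat \<Rightarrow> (real \<Rightarrow> complex) \<Rightarrow> real" where
  "energy m g = integral {0..1} (\<lambda>s. (kds g m s)^2) / 2"

end

theory Submission
  imports Defs "HOL-Probability.Characteristic_Functions"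
begin

(* Let u = k_{s^{2m}} and f = u'' + \<kappa>^2 u, so that F0 = (-1)^(m+1) f.  The function
   z = (u' - i \<kappa> u) e^{i \<kappa> s} satisfies z' = f e^{i \<kappa> s} and |z|^2 = u'^2 + \<kappa>^2 u^2, and its mean
   is -2 i \<kappa> c(u), where c(u) is the Fourier coefficient of u at frequency \<kappa>.  Hence \<kappa>^2 u^2 is
   bounded pointwise in terms of the integral of f^2 and |c(u)|^2, and then so is the integral of u''^2.
   Integration by parts gives |c(u)| = |\<kappa>|^{2m} |c(k)| and c(k) = -i \<kappa> c(\<phi>), where \<phi>' = k - \<kappa> and
   \<phi>(0) = \<phi>(1) = 0.  Closedness makes c(\<phi>) small: the tangent is T(0) e^{i(\<kappa> s + \<phi>(s))} and integrates
   to zero, so i c(\<phi>) is minus the integral of e^{i \<kappa> s} (e^{i \<phi>} - 1 - i \<phi>), which is at most the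
   integral of \<phi>^2 / 2.  Wirtinger's inequality bounds that by the integral of k_{s^m}^2 = 2 E_m. *)

section \<open>Smooth real functions\<close>

definition smooth_real :: "(real \<Rightarrow> real) \<Rightarrow> bool" where
  "smooth_real f \<longleftrightarrow> (\<forall>n t. ((deriv ^^ n) f) differentiable (at t))"

definition differentiable_upto :: "nat \<Rightarrow> (real \<Rightarrow> real) \<Rightarrow> bool" where
  "differentiable_upto n f \<longleftrightarrow> (\<forall>j\<le>n. \<forall>t. ((deriv ^^ j) f) differentiable (at t))"

lemma smooth_real_iff_differentiable_upto: "smooth_real f \<longleftrightarrow> (\<forall>n. differentiable_upto n f)"
  unfolding smooth_real_def differentiable_upto_def by blast

lemma smooth_real_deriv: "smooth_real f \<Longrightarrow> smooth_real (deriv f)"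
  unfolding smooth_real_def by (metis funpow_Suc_right comp_apply)

lemma smooth_real_has_deriv: "smooth_real f \<Longrightarrow> (f has_real_derivative deriv f t) (at t)"
  unfolding smooth_real_def by (metis funpow_0 DERIV_deriv_iff_real_differentiable)

lemma higher_deriv_add_cmult:
  fixes f h :: "real \<Rightarrow> real"
  assumes "differentiable_upto n f" "differentiable_upto n h" "j \<le> n"
  shows "(deriv ^^ j) (\<lambda>x. f x + c * h x) = (\<lambda>x. (deriv ^^ j) f x + c * (deriv ^^ j) h x)"
  using \<open>j \<le> n\<close>
proof (induction j)
  case 0
  show ?case by simp
next
  case (Suc j)
  have "(deriv ^^ Suc j) (\<lambda>x. f x + c * h x) = deriv (\<lambda>x. (deriv ^^ j) f x + c * (deriv ^^ j) h x)"
    using Suc by simp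
  also have "\<dots> = (\<lambda>x. (deriv ^^ Suc j) f x + c * (deriv ^^ Suc j) h x)"
  proof
    fix x
    have "((deriv ^^ j) f has_real_derivative (deriv ^^ Suc j) f x) (at x)"
      and "((deriv ^^ j) h has_real_derivative (deriv ^^ Suc j) h x) (at x)"
      using assms(1,2) Suc.prems unfolding differentiable_upto_def
      by (simp_all add: DERIV_deriv_iff_real_differentiable)
    then show "deriv (\<lambda>x. (deriv ^^ j) f x + c * (deriv ^^ j) h x) x
        = (deriv ^^ Suc j) f x + c * (deriv ^^ Suc j) h x"
      by (intro DERIV_imp_deriv derivative_eq_intros) auto
  qed
  finally show ?case .
qed

lemma differentiable_upto_add_cmult:
  assumes "differentiable_upto n f" "differentiable_upto n h"
  shows "differentiable_upto n (\<lambda>x. f x + c * h x)"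
  using assms higher_deriv_add_cmult[OF assms]
  unfolding differentiable_upto_def by (simp del: funpow.simps)

lemma differentiable_upto_add:
  "differentiable_upto n f \<Longrightarrow> differentiable_upto n h \<Longrightarrow> differentiable_upto n (\<lambda>x. f x + h x)"
  using differentiable_upto_add_cmult[of n f h 1] by simp

lemma differentiable_upto_mult:
  "smooth_real f \<Longrightarrow> smooth_real h \<Longrightarrow> differentiable_upto n (\<lambda>x. f x * h x)"
proof (induction n arbitrary: f h)
  case 0
  then show ?case
    unfolding differentiable_upto_def smooth_real_def by (auto intro!: differentiable_mult dest: spec[of _ 0])
next
  case (Suc n)
  have deriv_mult: "deriv (\<lambda>x. f x * h x) = (\<lambda>x. deriv f x * h x + f x * deriv h x)"
    using Suc.prems
    by (intro ext DERIV_imp_deriv) (auto intro!: derivative_eq_intros smooth_real_has_deriv)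
  have "differentiable_upto n (deriv (\<lambda>x. f x * h x))"
    unfolding deriv_mult
    using Suc.IH Suc.prems smooth_real_deriv by (intro differentiable_upto_add) blast+
  then have higher: "(deriv ^^ Suc j) (\<lambda>x. f x * h x) differentiable (at t)" if "j \<le> n" for j t
    using that unfolding differentiable_upto_def by (simp add: funpow_Suc_right del: funpow.simps)
  have base: "(\<lambda>x. f x * h x) differentiable (at t)" for t
    using Suc.prems by (intro differentiable_mult) (auto simp: smooth_real_def dest: spec[of _ 0])
  show ?case
    unfolding differentiable_upto_def
  proof (intro allI impI)
    fix j t
    assume "j \<le> Suc n"
    then show "(deriv ^^ j) (\<lambda>x. f x * h x) differentiable (at t)"
      using higher base by (cases j) simp_all
  qed
qed

lemma smooth_real_mult: "smooth_real f \<Longrightarrow> smooth_real h \<Longrightarrow> smooth_real (\<lambda>x. f x * h x)"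
  by (simp add: smooth_real_iff_differentiable_upto differentiable_upto_mult)

lemma smooth_real_diff: "smooth_real f \<Longrightarrow> smooth_real h \<Longrightarrow> smooth_real (\<lambda>x. f x - h x)"
  using differentiable_upto_add_cmult[of _ f h "-1"]
  by (simp add: smooth_real_iff_differentiable_upto)

lemma smooth_curve_vd: "smooth_curve F \<Longrightarrow> smooth_curve (vd F)"
  unfolding smooth_curve_def by (metis funpow_Suc_right comp_apply)

lemma smooth_curve_has_vector_derivative: "smooth_curve F \<Longrightarrow> (F has_vector_derivative vd F t) (at t)"
  unfolding smooth_curve_def vd_def by (metis funpow_0 vector_derivative_works)

lemma higher_deriv_bounded_linear:
  assumes "bounded_linear L" "smooth_curve F"
  shows "(deriv ^^ n) (\<lambda>t. L (F t)) = (\<lambda>t. L ((vd ^^ n) F t))"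
  using assms(2)
proof (induction n arbitrary: F)
  case 0
  show ?case by simp
next
  case (Suc n)
  have "deriv (\<lambda>t. L (F t)) = (\<lambda>t. L (vd F t))"
    using bounded_linear.has_vector_derivative[OF assms(1) smooth_curve_has_vector_derivative[OF Suc.prems]]
    by (intro ext DERIV_imp_deriv) (simp add: has_real_derivative_iff_has_vector_derivative)
  then show ?case
    using Suc.IH smooth_curve_vd[OF Suc.prems] by (simp add: funpow_Suc_right del: funpow.simps)
qed

lemma smooth_real_bounded_linear:
  assumes "bounded_linear L" "smooth_curve F"
  shows "smooth_real (\<lambda>t. L (F t))"
  unfolding smooth_real_def higher_deriv_bounded_linear[OF assms]
  using assms unfolding smooth_curve_def
  by (blast intro: differentiable_compose bounded_linear_imp_differentiable)

lemma deriv_periodic: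
  fixes f :: "real \<Rightarrow> real"
  assumes "f differentiable (at (t + p))" "\<And>t. f (t + p) = f t"
  shows "deriv f (t + p) = deriv f t"
proof -
  have "((\<lambda>x. f (x + p)) has_real_derivative deriv f (t + p)) (at t)"
    using assms(1) DERIV_shift[of f _ t p] DERIV_deriv_iff_real_differentiable by blast
  then show ?thesis
    using assms(2) by (simp add: DERIV_imp_deriv)
qed

lemma higher_deriv_periodic:
  assumes "smooth_real f" "\<And>t. f (t + p) = f t"
  shows "(deriv ^^ j) f (t + p) = (deriv ^^ j) f t"
proof (induction j arbitrary: t)
  case 0
  show ?case using assms(2) by simp
next
  case (Suc j)
  show ?case
    using assms(1) Suc.IH unfolding smooth_real_def by (simp add: deriv_periodic)
qed

lemma vd_periodic:
  fixes F :: "real \<Rightarrow> complex"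
  assumes "F differentiable (at (t + p))" "\<And>t. F (t + p) = F t"
  shows "vd F (t + p) = vd F t"
proof -
  have "(F has_vector_derivative vd F (t + p)) (at (t + p))"
    using assms(1) unfolding vd_def by (rule vector_derivative_works[THEN iffD1])
  moreover have "((\<lambda>x. x + p) has_vector_derivative 1) (at t)"
    by (auto intro!: derivative_eq_intros)
  ultimately have "((\<lambda>x. F (x + p)) has_vector_derivative vd F (t + p)) (at t)"
    using vector_diff_chain_at[of "\<lambda>x. x + p" 1 t F] by (simp add: comp_def)
  then show ?thesis
    using assms(2) unfolding vd_def by (simp add: vector_derivative_at)
qed

section \<open>Inequalities on the unit interval\<close>

lemma square_integral_abs_le_integral_square:
  fixes f :: "real \<Rightarrow> real"
  assumes "continuous_on {0..1} f"
  shows "(integral {0..1} (\<lambda>s. \<bar>f s\<bar>))\<^sup>2 \<le> integral {0..1} (\<lambda>s. (f s)\<^sup>2)"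
proof -
  define A where "A = integral {0..1} (\<lambda>s. \<bar>f s\<bar>)"
  define Q where "Q = integral {0..1} (\<lambda>s. (f s)\<^sup>2)"
  have "((\<lambda>s. (f s)\<^sup>2) has_integral Q) {0..1}" "((\<lambda>s. \<bar>f s\<bar>) has_integral A) {0..1}"
    unfolding A_def Q_def
    by (intro integrable_integral integrable_continuous_interval continuous_intros assms)+
  moreover have "((\<lambda>s. A\<^sup>2) has_integral A\<^sup>2) {0..1::real}"
    using has_integral_const_real[of "A\<^sup>2" 0 1] by simp
  ultimately have "((\<lambda>s. (f s)\<^sup>2 - 2 * A * \<bar>f s\<bar> + A\<^sup>2) has_integral Q - 2 * A * A + A\<^sup>2) {0..1}"
    by (intro has_integral_add has_integral_diff has_integral_mult_right)
  moreover have "0 \<le> (f s)\<^sup>2 - 2 * A * \<bar>f s\<bar> + A\<^sup>2" for s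
    using zero_le_power2[of "\<bar>f s\<bar> - A"] by (simp add: power2_diff algebra_simps)
  ultimately have "0 \<le> Q - 2 * A * A + A\<^sup>2"
    by (rule has_integral_nonneg)
  then show ?thesis
    unfolding A_def[symmetric] Q_def[symmetric] by (simp add: power2_eq_square)
qed

lemma norm_diff_le_integral_deriv:
  fixes F :: "real \<Rightarrow> 'a::banach"
  assumes der: "\<And>s. s \<in> {0..1} \<Longrightarrow> (F has_vector_derivative F' s) (at s within {0..1})"
    and h: "continuous_on {0..1} h" "\<And>s. s \<in> {0..1} \<Longrightarrow> norm (F' s) \<le> h s"
    and ab: "a \<in> {0..1}" "b \<in> {0..1}"
  shows "norm (F b - F a) \<le> integral {0..1} h"
proof -
  have ordered: "norm (F y - F x) \<le> integral {0..1} h"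
    if "x \<in> {0..1}" "y \<in> {0..1}" "x \<le> y" for x y
  proof -
    have sub: "{x..y} \<subseteq> {0..1}"
      using that by auto
    have "(F' has_integral (F y - F x)) {x..y}"
      using that sub
      by (intro fundamental_theorem_of_calculus) (auto intro: has_vector_derivative_within_subset[OF der])
    moreover have "h integrable_on {x..y}"
      by (intro integrable_continuous_interval continuous_on_subset[OF h(1) sub])
    ultimately have "norm (F y - F x) \<le> integral {x..y} h"
      using h(2) sub integral_norm_bound_integral[of F' "{x..y}" h]
      by (auto simp: integral_unique has_integral_integrable)
    also have "\<dots> \<le> integral {0..1} h"
      using sub h norm_ge_zero order_trans
      by (intro integral_subset_le integrable_continuous_interval continuous_on_subset[OF h(1)]) blast+
    finally show ?thesis .
  qed
  show ?thesis
    using ordered[of a b] ordered[of b a] ab by (cases "a \<le> b") (auto simp: norm_minus_commute)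
qed

lemma norm_le_integral_deriv_add_norm_integral:
  fixes z :: "real \<Rightarrow> 'a::banach"
  assumes der: "\<And>s. s \<in> {0..1} \<Longrightarrow> (z has_vector_derivative z' s) (at s within {0..1})"
    and h: "continuous_on {0..1} h" "\<And>s. s \<in> {0..1} \<Longrightarrow> norm (z' s) \<le> h s"
    and s: "s \<in> {0..1}"
  shows "norm (z s) \<le> integral {0..1} h + norm (integral {0..1} z)"
proof -
  have z: "z integrable_on {0..1}"
    by (intro integrable_continuous_interval continuous_on_vector_derivative[OF der])
  have "norm (z s - integral {0..1} z) = norm (integral {0..1} (\<lambda>t. z s - z t))"
    using integral_diff[OF integrable_const_ivl z, of "z s"] by simp
  also have "\<dots> \<le> integral {0..1::real} (\<lambda>t. integral {0..1} h)"
    using norm_diff_le_integral_deriv[OF der h _ s] z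
    by (intro integral_norm_bound_integral integrable_diff) (auto simp: norm_minus_commute)
  finally have "norm (z s - integral {0..1} z) \<le> integral {0..1} h"
    by simp
  then show ?thesis
    using norm_triangle_sub[of "z s" "integral {0..1} z"] by simp
qed

lemma square_le_integral_square_deriv:
  fixes f :: "real \<Rightarrow> real"
  assumes der: "\<And>s. s \<in> {0..1} \<Longrightarrow> (f has_real_derivative f' s) (at s within {0..1})"
    and f': "continuous_on {0..1} f'"
    and zero: "s\<^sub>0 \<in> {0..1}" "f s\<^sub>0 = 0"
    and s: "s \<in> {0..1}"
  shows "(f s)\<^sup>2 \<le> integral {0..1} (\<lambda>t. (f' t)\<^sup>2)"
proof -
  have "\<bar>f s\<bar> \<le> integral {0..1} (\<lambda>t. \<bar>f' t\<bar>)"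
    using norm_diff_le_integral_deriv[of f f' "\<lambda>t. \<bar>f' t\<bar>" s\<^sub>0 s] der zero s
    by (auto simp: has_real_derivative_iff_has_vector_derivative intro!: continuous_intros f')
  then have "(f s)\<^sup>2 \<le> (integral {0..1} (\<lambda>t. \<bar>f' t\<bar>))\<^sup>2"
    by (metis abs_ge_zero power2_abs power_mono)
  also have "\<dots> \<le> integral {0..1} (\<lambda>t. (f' t)\<^sup>2)"
    by (rule square_integral_abs_le_integral_square[OF f'])
  finally show ?thesis .
qed

lemma exists_zero_if_integral_eq_0:
  fixes f :: "real \<Rightarrow> real"
  assumes f: "continuous_on {0..1} f" and int: "integral {0..1} f = 0"
  obtains s where "s \<in> {0..1}" "f s = 0"
proof -
  obtain a where a: "a \<in> {0..1}" "\<And>y. y \<in> {0..1} \<Longrightarrow> f a \<le> f y"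
    using continuous_attains_inf[OF compact_Icc _ f] by auto
  obtain b where b: "b \<in> {0..1}" "\<And>y. y \<in> {0..1} \<Longrightarrow> f y \<le> f b"
    using continuous_attains_sup[OF compact_Icc _ f] by auto
  have "integral {0..1::real} (\<lambda>_. f a) \<le> integral {0..1} f"
    using a by (intro integral_le integrable_continuous_interval continuous_intros f) auto
  moreover have "integral {0..1} f \<le> integral {0..1::real} (\<lambda>_. f b)"
    using b by (intro integral_le integrable_continuous_interval continuous_intros f) auto
  ultimately have "f a \<le> 0" "0 \<le> f b"
    using int by simp_all
  moreover have "connected (f ` {0..1})"
    by (intro connected_continuous_image f connected_Icc)
  ultimately have "0 \<in> f ` {0..1}"
    using a(1) b(1) unfolding connected_iff_interval by blast
  then obtain s where "0 = f s" "s \<in> {0..1}"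
    by (rule imageE)
  then show ?thesis
    using that by simp
qed

lemma integral_square_le_integral_square_deriv:
  fixes f :: "real \<Rightarrow> real"
  assumes der: "\<And>s. s \<in> {0..1} \<Longrightarrow> (f has_real_derivative f' s) (at s within {0..1})"
    and f': "continuous_on {0..1} f'"
    and mean: "integral {0..1} f = 0"
  shows "integral {0..1} (\<lambda>t. (f t)\<^sup>2) \<le> integral {0..1} (\<lambda>t. (f' t)\<^sup>2)"
proof -
  have f: "continuous_on {0..1} f"
    using der by (rule DERIV_continuous_on)
  obtain s\<^sub>0 where "s\<^sub>0 \<in> {0..1}" "f s\<^sub>0 = 0"
    using exists_zero_if_integral_eq_0[OF f mean] .
  then have "integral {0..1} (\<lambda>t. (f t)\<^sup>2)
      \<le> integral {0..1::real} (\<lambda>_. integral {0..1} (\<lambda>t. (f' t)\<^sup>2))"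
    using square_le_integral_square_deriv[OF der f']
    by (intro integral_le integrable_continuous_interval continuous_intros f) auto
  then show ?thesis
    by simp
qed

section \<open>Fourier coefficients and the operator \<open>u'' + \<kappa>\<^sup>2 u\<close>\<close>

lemma norm_iexp_sub_linear_le: "cmod (iexp x - 1 - \<i> * x) \<le> x\<^sup>2 / 2"
  using iexp_approx1[of x 1] by (simp add: numeral_2_eq_2 algebra_simps)

definition fourier_coeff :: "real \<Rightarrow> (real \<Rightarrow> real) \<Rightarrow> complex" where
  "fourier_coeff \<kappa> f = integral {0..1} (\<lambda>s. of_real (f s) * iexp (\<kappa> * s))"

lemma has_vector_derivative_iexp_comp:
  assumes "(\<theta> has_real_derivative \<theta>') (at s within S)"
  shows "((\<lambda>s. iexp (\<theta> s)) has_vector_derivative \<i> * \<theta>' * iexp (\<theta> s)) (at s within S)"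
  using vector_diff_chain_within[OF assms[unfolded has_real_derivative_iff_has_vector_derivative]
      has_vector_derivative_iexp]
  by (simp add: comp_def scaleR_conv_of_real ac_simps)

lemma has_vector_derivative_iexp_linear:
  "((\<lambda>s. iexp (\<kappa> * s)) has_vector_derivative \<i> * \<kappa> * iexp (\<kappa> * s)) (at s within S)"
  by (rule has_vector_derivative_iexp_comp) (auto intro!: derivative_eq_intros)

lemma has_integral_fourier_coeff:
  "continuous_on {0..1} f \<Longrightarrow> ((\<lambda>s. of_real (f s) * iexp (\<kappa> * s)) has_integral fourier_coeff \<kappa> f) {0..1}"
  unfolding fourier_coeff_def by (intro integrable_integral integrable_continuous_interval continuous_intros)

lemma fourier_coeff_deriv:
  fixes f f' :: "real \<Rightarrow> real"
  assumes \<kappa>: "iexp \<kappa> = 1"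
    and der: "\<And>s. s \<in> {0..1} \<Longrightarrow> (f has_real_derivative f' s) (at s within {0..1})"
    and f': "continuous_on {0..1} f'"
    and periodic: "f 0 = f 1"
  shows "fourier_coeff \<kappa> f' = - \<i> * \<kappa> * fourier_coeff \<kappa> f"
proof -
  have f: "continuous_on {0..1} f"
    using der by (rule DERIV_continuous_on)
  define e where "e s = iexp (\<kappa> * s)" for s
  have "((\<lambda>s. of_real (f s) * e s) has_vector_derivative of_real (f s) * (\<i> * \<kappa> * e s) + of_real (f' s) * e s)
      (at s within {0..1})" if "s \<in> {0..1}" for s
    unfolding e_def
    by (rule has_vector_derivative_mult[OF has_vector_derivative_of_real[OF der[OF that]] has_vector_derivative_iexp_linear])
  then have "((\<lambda>s. of_real (f s) * (\<i> * \<kappa> * e s) + of_real (f' s) * e s) has_integral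
      of_real (f 1) * e 1 - of_real (f 0) * e 0) {0..1}"
    by (intro fundamental_theorem_of_calculus) auto
  moreover have "of_real (f 1) * e 1 - of_real (f 0) * e 0 = 0"
    unfolding e_def using \<kappa> periodic by simp
  moreover have "(\<lambda>s. of_real (f s) * (\<i> * \<kappa> * e s) + of_real (f' s) * e s)
      = (\<lambda>s. \<i> * \<kappa> * (of_real (f s) * e s) + of_real (f' s) * e s)"
    by (simp add: fun_eq_iff algebra_simps)
  ultimately have zero: "((\<lambda>s. \<i> * \<kappa> * (of_real (f s) * e s) + of_real (f' s) * e s) has_integral 0) {0..1}"
    by simp
  have "((\<lambda>s. \<i> * \<kappa> * (of_real (f s) * e s) + of_real (f' s) * e s) has_integral
      \<i> * \<kappa> * fourier_coeff \<kappa> f + fourier_coeff \<kappa> f') {0..1}"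
    unfolding e_def by (intro has_integral_add has_integral_mult_right has_integral_fourier_coeff f f')
  from has_integral_unique[OF this zero] show ?thesis
    by (simp add: add_eq_0_iff)
qed


lemma has_integral_iexp_linear:
  assumes "iexp \<kappa> = 1" "\<kappa> \<noteq> 0"
  shows "((\<lambda>s. iexp (\<kappa> * s)) has_integral 0) {0..1}"
proof -
  have "fourier_coeff \<kappa> (\<lambda>_. 0) = - \<i> * \<kappa> * fourier_coeff \<kappa> (\<lambda>_. 1)"
    by (rule fourier_coeff_deriv[OF assms(1)]) simp_all
  then have "fourier_coeff \<kappa> (\<lambda>_. 1) = 0"
    using assms(2) by (simp add: fourier_coeff_def)
  then show ?thesis
    using has_integral_fourier_coeff[of "\<lambda>_. 1" \<kappa>] by simp
qed

lemma integral_oscillator_phase: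
  fixes u u' :: "real \<Rightarrow> real"
  assumes u: "\<And>t. t \<in> {0..1} \<Longrightarrow> (u has_real_derivative u' t) (at t within {0..1})"
    and u': "continuous_on {0..1} u'"
    and periodic: "u 0 = u 1" and \<kappa>: "iexp \<kappa> = 1"
  shows "integral {0..1} (\<lambda>t. (of_real (u' t) - \<i> * \<kappa> * u t) * iexp (\<kappa> * t))
    = - 2 * \<i> * \<kappa> * fourier_coeff \<kappa> u"
proof -
  have "(\<lambda>t. (of_real (u' t) - \<i> * \<kappa> * u t) * iexp (\<kappa> * t))
      = (\<lambda>t. of_real (u' t) * iexp (\<kappa> * t) - \<i> * \<kappa> * (of_real (u t) * iexp (\<kappa> * t)))"
    by (simp add: left_diff_distrib mult.assoc)
  moreover have "((\<lambda>t. of_real (u' t) * iexp (\<kappa> * t) - \<i> * \<kappa> * (of_real (u t) * iexp (\<kappa> * t)))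
      has_integral fourier_coeff \<kappa> u' - \<i> * \<kappa> * fourier_coeff \<kappa> u) {0..1}"
    using u by (intro has_integral_diff has_integral_mult_right has_integral_fourier_coeff u' DERIV_continuous_on)
  ultimately have "integral {0..1} (\<lambda>t. (of_real (u' t) - \<i> * \<kappa> * u t) * iexp (\<kappa> * t))
      = fourier_coeff \<kappa> u' - \<i> * \<kappa> * fourier_coeff \<kappa> u"
    by (simp add: integral_unique)
  then show ?thesis
    using fourier_coeff_deriv[OF \<kappa> u u' periodic] by simp
qed

lemma square_le_oscillator_bound:
  fixes u u' u'' :: "real \<Rightarrow> real"
  assumes u: "\<And>t. t \<in> {0..1} \<Longrightarrow> (u has_real_derivative u' t) (at t within {0..1})"
    and u': "\<And>t. t \<in> {0..1} \<Longrightarrow> (u' has_real_derivative u'' t) (at t within {0..1})"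
    and u'': "continuous_on {0..1} u''"
    and periodic: "u 0 = u 1" and \<kappa>: "iexp \<kappa> = 1" and s: "s \<in> {0..1}"
  shows "\<kappa>\<^sup>2 * (u s)\<^sup>2 \<le> 2 * integral {0..1} (\<lambda>t. (u'' t + \<kappa>\<^sup>2 * u t)\<^sup>2)
    + 8 * \<kappa>\<^sup>2 * (cmod (fourier_coeff \<kappa> u))\<^sup>2"
proof -
  define f where "f t = u'' t + \<kappa>\<^sup>2 * u t" for t
  define b where "b = fourier_coeff \<kappa> u"
  define A where "A = integral {0..1} (\<lambda>t. \<bar>f t\<bar>)"
  define z where "z t = (of_real (u' t) - \<i> * \<kappa> * u t) * iexp (\<kappa> * t)" for t
  have cont_u: "continuous_on {0..1} u"
    using u by (rule DERIV_continuous_on)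
  have cont_u': "continuous_on {0..1} u'"
    using u' by (rule DERIV_continuous_on)
  have cont_f: "continuous_on {0..1} f"
    unfolding f_def by (intro continuous_intros u'' cont_u)
  have z_der: "(z has_vector_derivative of_real (f t) * iexp (\<kappa> * t)) (at t within {0..1})"
    if "t \<in> {0..1}" for t
    unfolding z_def f_def
    using has_vector_derivative_mult[OF has_vector_derivative_diff[OF
          has_vector_derivative_of_real[OF u'[OF that]]
          has_vector_derivative_mult_right[OF has_vector_derivative_of_real[OF u[OF that]]]]
        has_vector_derivative_iexp_linear, of "\<i> * \<kappa>" \<kappa>]
    by (simp add: algebra_simps power2_eq_square)
  have "integral {0..1} z = - 2 * \<i> * \<kappa> * b"
    unfolding z_def b_def by (rule integral_oscillator_phase[OF u cont_u' periodic \<kappa>])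
  then have z_bound: "cmod (z s) \<le> A + 2 * \<bar>\<kappa>\<bar> * cmod b"
    using norm_le_integral_deriv_add_norm_integral[OF z_der, of "\<lambda>t. \<bar>f t\<bar>" s] s cont_f
    unfolding A_def by (auto simp: norm_mult intro!: continuous_intros)
  have "(cmod (z s))\<^sup>2 = (cmod (of_real (u' s) - \<i> * \<kappa> * u s))\<^sup>2"
    unfolding z_def by (simp add: norm_mult)
  also have "\<dots> = (u' s)\<^sup>2 + \<kappa>\<^sup>2 * (u s)\<^sup>2"
    unfolding cmod_power2 by (simp add: power2_eq_square)
  finally have "\<kappa>\<^sup>2 * (u s)\<^sup>2 \<le> (cmod (z s))\<^sup>2"
    by simp
  also have "\<dots> \<le> (A + 2 * \<bar>\<kappa>\<bar> * cmod b)\<^sup>2"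
    by (rule power_mono[OF z_bound norm_ge_zero])
  also have "\<dots> \<le> 2 * A\<^sup>2 + 8 * \<kappa>\<^sup>2 * (cmod b)\<^sup>2"
    using sum_squares_bound[of A "2 * \<bar>\<kappa>\<bar> * cmod b"] by (simp add: power2_eq_square algebra_simps)
  also have "A\<^sup>2 \<le> integral {0..1} (\<lambda>t. (f t)\<^sup>2)"
    unfolding A_def by (rule square_integral_abs_le_integral_square[OF cont_f])
  finally show ?thesis
    unfolding f_def b_def by simp
qed

lemma integral_square_le_oscillator_bound:
  fixes u u' u'' :: "real \<Rightarrow> real"
  assumes u: "\<And>t. t \<in> {0..1} \<Longrightarrow> (u has_real_derivative u' t) (at t within {0..1})"
    and u': "\<And>t. t \<in> {0..1} \<Longrightarrow> (u' has_real_derivative u'' t) (at t within {0..1})"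
    and u'': "continuous_on {0..1} u''"
    and periodic: "u 0 = u 1" and \<kappa>: "iexp \<kappa> = 1"
  shows "integral {0..1} (\<lambda>t. (u'' t)\<^sup>2)
    \<le> (2 + 4 * \<kappa>\<^sup>2) * integral {0..1} (\<lambda>t. (u'' t + \<kappa>\<^sup>2 * u t)\<^sup>2)
    + 16 * \<kappa>^4 * (cmod (fourier_coeff \<kappa> u))\<^sup>2"
proof -
  define f where "f t = u'' t + \<kappa>\<^sup>2 * u t" for t
  define Q where "Q = integral {0..1} (\<lambda>t. (f t)\<^sup>2)"
  define B where "B = 2 * Q + 8 * \<kappa>\<^sup>2 * (cmod (fourier_coeff \<kappa> u))\<^sup>2"
  have cont_f: "continuous_on {0..1} f"
    unfolding f_def using u by (intro continuous_intros u'' DERIV_continuous_on)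
  have pointwise: "(u'' t)\<^sup>2 \<le> 2 * (f t)\<^sup>2 + 2 * \<kappa>\<^sup>2 * B" if "t \<in> {0..1}" for t
  proof -
    have "(u'' t)\<^sup>2 \<le> 2 * (f t)\<^sup>2 + 2 * \<kappa>\<^sup>2 * (\<kappa>\<^sup>2 * (u t)\<^sup>2)"
      using sum_squares_bound[of "f t" "- \<kappa>\<^sup>2 * u t"]
      unfolding f_def by (simp add: power2_eq_square algebra_simps)
    also have "\<kappa>\<^sup>2 * (u t)\<^sup>2 \<le> B"
      unfolding B_def Q_def f_def by (rule square_le_oscillator_bound[OF u u' u'' periodic \<kappa> that])
    finally show ?thesis
      by (simp add: mult_left_mono)
  qed
  have rhs: "((\<lambda>t. 2 * (f t)\<^sup>2 + 2 * \<kappa>\<^sup>2 * B) has_integral 2 * Q + 2 * \<kappa>\<^sup>2 * B) {0..1}"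
  proof (rule has_integral_add)
    show "((\<lambda>t. 2 * (f t)\<^sup>2) has_integral 2 * Q) {0..1}"
      unfolding Q_def
      by (intro has_integral_mult_right integrable_integral integrable_continuous_interval continuous_intros cont_f)
    show "((\<lambda>t. 2 * \<kappa>\<^sup>2 * B) has_integral 2 * \<kappa>\<^sup>2 * B) {0..1::real}"
      using has_integral_const_real[of "2 * \<kappa>\<^sup>2 * B" 0 1] by simp
  qed
  have "(\<lambda>t. (u'' t)\<^sup>2) integrable_on {0..1}"
    by (intro integrable_continuous_interval continuous_intros u'')
  from has_integral_le[OF integrable_integral[OF this] rhs pointwise]
  have "integral {0..1} (\<lambda>t. (u'' t)\<^sup>2) \<le> 2 * Q + 2 * \<kappa>\<^sup>2 * B" .
  then show ?thesis
    unfolding B_def Q_def f_def by (simp add: algebra_simps power2_eq_square power4_eq_xxxx)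
qed

section \<open>Closed curves parametrised by arclength\<close>

locale closed_unit_curve =
  fixes g :: "real \<Rightarrow> complex"
  assumes closed_unit_length_curve: "closed_unit_length_curve g"
begin

lemma smooth: "smooth_curve g"
  and periodic: "g (t + 1) = g t"
  and unit_speed: "norm (vd g t) = 1"
  using closed_unit_length_curve unfolding closed_unit_length_curve_def by blast+

lemma curvature_eq: "curvature g t = Re (vd g t) * Im (vd (vd g) t) - Im (vd g t) * Re (vd (vd g) t)"
  by (simp add: curvature_def unit_speed)

lemma smooth_real_curvature: "smooth_real (curvature g)"
  unfolding curvature_eq[abs_def]
  by (intro smooth_real_diff smooth_real_mult smooth_real_bounded_linear bounded_linear_Re bounded_linear_Im
      smooth_curve_vd smooth)

lemma curvature_periodic: "curvature g (t + 1) = curvature g t"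
proof -
  have "vd g (t + 1) = vd g t" for t
    using vd_periodic[of g] smooth periodic unfolding smooth_curve_def by (metis funpow_0)
  moreover from this have "vd (vd g) (t + 1) = vd (vd g) t"
    using vd_periodic[of "vd g"] smooth_curve_vd[OF smooth] unfolding smooth_curve_def by (metis funpow_0)
  ultimately show ?thesis
    by (simp add: curvature_eq)
qed

lemma kds_periodic: "kds g j (t + 1) = kds g j t"
  unfolding kds_def by (rule higher_deriv_periodic[OF smooth_real_curvature curvature_periodic])

lemma kds_has_deriv: "(kds g j has_real_derivative kds g (Suc j) t) (at t)"
  using smooth_real_curvature unfolding smooth_real_def kds_def
  by (simp add: DERIV_deriv_iff_real_differentiable)

lemma continuous_on_kds: "continuous_on S (kds g j)"
  by (meson kds_has_deriv DERIV_isCont continuous_at_imp_continuous_on)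

lemma kds_0: "kds g 0 = curvature g"
  by (simp add: kds_def)

lemma has_integral_kds_Suc: "(kds g (Suc j) has_integral 0) {0..1}"
  using fundamental_theorem_of_calculus[of 0 1 "kds g j" "kds g (Suc j)"] kds_periodic[of j 0]
  by (simp add: has_real_derivative_iff_has_vector_derivative[symmetric] has_field_derivative_at_within kds_has_deriv)

lemma integral_square_kds_mono:
  assumes "1 \<le> i" "i \<le> j"
  shows "integral {0..1} (\<lambda>t. (kds g i t)\<^sup>2) \<le> integral {0..1} (\<lambda>t. (kds g j t)\<^sup>2)"
  using assms(2)
proof (induction j rule: dec_induct)
  case base
  show ?case by simp
next
  case (step j)
  obtain j' where "j = Suc j'"
    using step.hyps(1) assms(1) by (cases j) auto
  then have "integral {0..1} (\<lambda>t. (kds g j t)\<^sup>2) \<le> integral {0..1} (\<lambda>t. (kds g (Suc j) t)\<^sup>2)"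
    using has_integral_kds_Suc[of j']
    by (intro integral_square_le_integral_square_deriv)
      (auto intro: kds_has_deriv[THEN has_field_derivative_at_within] continuous_on_kds simp: integral_unique)
  then show ?case
    using step.IH by linarith
qed

text \<open>Differentiating \<open>T * cnj T = 1\<close> for the unit tangent \<open>T\<close> shows that \<open>cnj T * T'\<close> is
  purely imaginary; its imaginary part is the curvature.\<close>
lemma frenet_equation: "vd (vd g) t = \<i> * curvature g t * vd g t"
proof -
  let ?T = "vd g" and ?T' = "vd (vd g)"
  have "((\<lambda>t. ?T t * cnj (?T t)) has_vector_derivative ?T t * cnj (?T' t) + ?T' t * cnj (?T t)) (at t)"
    by (intro has_vector_derivative_mult has_vector_derivative_cnj
        smooth_curve_has_vector_derivative smooth_curve_vd smooth)
  moreover have "(\<lambda>t. ?T t * cnj (?T t)) = (\<lambda>_. 1)"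
    using unit_speed by (simp add: fun_eq_iff complex_norm_square[symmetric])
  ultimately have "?T t * cnj (?T' t) + ?T' t * cnj (?T t) = 0"
    using vector_derivative_unique_at[OF _ has_vector_derivative_const] by metis
  then have "Re (cnj (?T t) * ?T' t) = 0"
    by (simp add: complex_eq_iff algebra_simps)
  then have "cnj (?T t) * ?T' t = \<i> * curvature g t"
    by (simp add: complex_eq_iff curvature_eq)
  then have "?T t * cnj (?T t) * ?T' t = \<i> * curvature g t * ?T t"
    by (metis mult.assoc mult.commute)
  then show ?thesis
    using unit_speed by (simp add: complex_norm_square[symmetric])
qed

end

lemma square_abs_power_odd_mult: "(\<bar>x\<bar> ^ (2*n+1) * y)\<^sup>2 = x ^ (4*n+2) * y\<^sup>2"
  for x y :: real
proof -
  have "(\<bar>x\<bar> ^ (2*n+1))\<^sup>2 = \<bar>x\<bar> ^ ((2*n+1)*2)"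
    by (rule power_mult[symmetric])
  also have "\<dots> = x ^ ((2*n+1)*2)"
    by (rule power_even_abs) simp
  also have "(2*n+1)*2 = 4*n+2"
    by simp
  finally show ?thesis
    by (simp add: power_mult_distrib)
qed

lemma square_neg_one_power_mult: "((-1) ^ n * x)\<^sup>2 = x\<^sup>2"
  for x :: real
  by (cases "even n") (simp_all add: power_mult_distrib)

locale closed_curve_total_curvature = closed_unit_curve +
  fixes \<kappa> :: real
  assumes integral_curvature: "integral {0..1} (curvature g) = \<kappa>"
    and iexp_total_curvature: "iexp \<kappa> = 1"
    and total_curvature_nonzero: "\<kappa> \<noteq> 0"
begin

definition \<psi> :: "real \<Rightarrow> real" where
  "\<psi> s = curvature g s - \<kappa>"

definition \<phi> :: "real \<Rightarrow> real" where
  "\<phi> s = integral {0..s} \<psi>"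

lemma continuous_on_\<psi>: "continuous_on S \<psi>"
  unfolding \<psi>_def[abs_def] using continuous_on_kds[of S 0] by (auto simp: kds_0 intro!: continuous_intros)

lemma \<psi>_has_deriv: "(\<psi> has_real_derivative kds g 1 s) (at s)"
  unfolding \<psi>_def[abs_def] using kds_has_deriv[of 0 s] by (auto simp: kds_0 intro!: derivative_eq_intros)

lemma has_integral_\<psi>: "(\<psi> has_integral 0) {0..1}"
proof -
  have "(curvature g has_integral \<kappa>) {0..1}"
    using integral_curvature continuous_on_kds[of "{0..1}" 0]
    by (metis kds_0 integrable_integral integrable_continuous_interval)
  from has_integral_diff[OF this has_integral_const_real[of \<kappa> 0 1]] show ?thesis
    unfolding \<psi>_def[abs_def] by simp
qed

lemma \<phi>_has_deriv: "s \<in> {0..1} \<Longrightarrow> (\<phi> has_real_derivative \<psi> s) (at s within {0..1})"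
  unfolding \<phi>_def[abs_def] by (intro integral_has_real_derivative continuous_on_\<psi>)

lemma \<phi>_0: "\<phi> 0 = 0" and \<phi>_1: "\<phi> 1 = 0"
  using has_integral_\<psi> by (simp_all add: \<phi>_def integral_unique)

lemma continuous_on_\<phi>: "continuous_on {0..1} \<phi>"
  using \<phi>_has_deriv by (rule DERIV_continuous_on)

lemma integral_square_\<psi>_le: "integral {0..1} (\<lambda>t. (\<psi> t)\<^sup>2) \<le> integral {0..1} (\<lambda>t. (kds g 1 t)\<^sup>2)"
  using has_integral_\<psi> \<psi>_has_deriv[THEN has_field_derivative_at_within]
  by (intro integral_square_le_integral_square_deriv) (auto intro: continuous_on_kds simp: integral_unique)

lemma tangent_eq: "s \<in> {0..1} \<Longrightarrow> vd g s = vd g 0 * iexp (\<kappa> * s + \<phi> s)"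
proof -
  define W where "W s = vd g s * iexp (- (\<kappa> * s + \<phi> s))" for s
  have W_deriv: "(W has_vector_derivative 0) (at s within {0..1})" if "s \<in> {0..1}" for s
  proof -
    have "((\<lambda>s. - (\<kappa> * s + \<phi> s)) has_real_derivative - curvature g s) (at s within {0..1})"
      using \<phi>_has_deriv[OF that] by (auto intro!: derivative_eq_intros simp: \<psi>_def)
    from has_vector_derivative_mult[OF
        has_vector_derivative_at_within[OF smooth_curve_has_vector_derivative[OF smooth_curve_vd[OF smooth]]]
        has_vector_derivative_iexp_comp[OF this]]
    have "(W has_vector_derivative vd g s * (\<i> * - curvature g s * iexp (- (\<kappa> * s + \<phi> s)))
        + \<i> * curvature g s * vd g s * iexp (- (\<kappa> * s + \<phi> s))) (at s within {0..1})"
      unfolding W_def frenet_equation .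
    moreover have "a * (\<i> * - c * x) + \<i> * c * a * x = 0" for a c x :: complex
      by (simp add: algebra_simps)
    ultimately show ?thesis
      by simp
  qed
  from has_vector_derivative_zero_constant[OF convex_real_interval(5) W_deriv]
  obtain c where c: "\<And>s. s \<in> {0..1} \<Longrightarrow> W s = c"
    by blast
  have inverse: "iexp (- x) * iexp x = 1" for x
  proof -
    have "iexp (- x) * iexp x = exp (\<i> * of_real (- x) + \<i> * of_real x)"
      by (rule mult_exp_exp)
    also have "\<dots> = 1"
      by simp
    finally show ?thesis .
  qed
  assume s: "s \<in> {0..1}"
  have "vd g s = W s * iexp (\<kappa> * s + \<phi> s)"
    by (simp only: W_def mult.assoc inverse mult_1_right)
  also have "W s = W 0"
    using c[OF s] c[of 0] by simp
  also have "W 0 = vd g 0"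
    by (simp add: W_def \<phi>_0)
  finally show ?thesis .
qed

text \<open>This is where closedness enters: the tangent integrates to \<open>g 1 - g 0 = 0\<close>.\<close>
lemma has_integral_iexp_angle: "((\<lambda>s. iexp (\<kappa> * s + \<phi> s)) has_integral 0) {0..1}"
proof -
  have "(vd g has_integral g 1 - g 0) {0..1}"
    by (intro fundamental_theorem_of_calculus)
      (auto intro: has_vector_derivative_at_within smooth_curve_has_vector_derivative smooth)
  then have "(vd g has_integral 0) {0..1}"
    using periodic[of 0] by simp
  with tangent_eq have "((\<lambda>s. vd g 0 * iexp (\<kappa> * s + \<phi> s)) has_integral 0) {0..1}"
    by (rule has_integral_eq)
  then have "((\<lambda>s. inverse (vd g 0) * (vd g 0 * iexp (\<kappa> * s + \<phi> s))) has_integral inverse (vd g 0) * 0) {0..1}"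
    by (rule has_integral_mult_right)
  moreover have "vd g 0 \<noteq> 0"
    using unit_speed[of 0] by auto
  ultimately show ?thesis
    by (simp add: mult.assoc[symmetric])
qed

lemma norm_fourier_coeff_\<phi>_le: "cmod (fourier_coeff \<kappa> \<phi>) \<le> integral {0..1} (\<lambda>t. (\<psi> t)\<^sup>2) / 2"
proof -
  define R where "R s = iexp (\<kappa> * s) * (iexp (\<phi> s) - 1 - \<i> * \<phi> s)" for s
  have "R = (\<lambda>s. iexp (\<kappa> * s + \<phi> s) - iexp (\<kappa> * s) - \<i> * (of_real (\<phi> s) * iexp (\<kappa> * s)))"
    by (simp add: fun_eq_iff R_def algebra_simps exp_add)
  moreover have "((\<lambda>s. iexp (\<kappa> * s + \<phi> s) - iexp (\<kappa> * s) - \<i> * (of_real (\<phi> s) * iexp (\<kappa> * s)))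
      has_integral 0 - 0 - \<i> * fourier_coeff \<kappa> \<phi>) {0..1}"
    by (intro has_integral_diff has_integral_mult_right has_integral_iexp_angle has_integral_fourier_coeff
        has_integral_iexp_linear iexp_total_curvature total_curvature_nonzero continuous_on_\<phi>)
  ultimately have R: "(R has_integral - \<i> * fourier_coeff \<kappa> \<phi>) {0..1}"
    by simp
  have "cmod (fourier_coeff \<kappa> \<phi>) \<le> integral {0..1} (\<lambda>s. (\<phi> s)\<^sup>2 / 2)"
  proof -
    have "cmod (integral {0..1} R) \<le> integral {0..1} (\<lambda>s. (\<phi> s)\<^sup>2 / 2)"
      using norm_iexp_sub_linear_le
      by (intro integral_norm_bound_integral has_integral_integrable[OF R] integrable_continuous_interval
          continuous_intros continuous_on_\<phi>) (auto simp: R_def norm_mult)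
    then show ?thesis
      using R by (simp add: integral_unique norm_mult)
  qed
  also have "\<dots> \<le> integral {0..1::real} (\<lambda>_. integral {0..1} (\<lambda>t. (\<psi> t)\<^sup>2) / 2)"
    using square_le_integral_square_deriv[OF \<phi>_has_deriv continuous_on_\<psi> _ \<phi>_0]
    by (intro integral_le integrable_continuous_interval continuous_intros continuous_on_\<phi>) auto
  finally show ?thesis
    by simp
qed

lemma fourier_coeff_curvature: "fourier_coeff \<kappa> (curvature g) = - \<i> * \<kappa> * fourier_coeff \<kappa> \<phi>"
proof -
  have "((\<lambda>s. of_real (\<psi> s) * iexp (\<kappa> * s) + \<kappa> * iexp (\<kappa> * s))
      has_integral fourier_coeff \<kappa> \<psi> + of_real \<kappa> * 0) {0..1}"
    by (intro has_integral_add has_integral_mult_right has_integral_fourier_coeff continuous_on_\<psi>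
        has_integral_iexp_linear iexp_total_curvature total_curvature_nonzero)
  moreover have "(\<lambda>s. of_real (\<psi> s) * iexp (\<kappa> * s) + \<kappa> * iexp (\<kappa> * s))
      = (\<lambda>s. of_real (curvature g s) * iexp (\<kappa> * s))"
    by (simp add: fun_eq_iff \<psi>_def algebra_simps)
  ultimately have "fourier_coeff \<kappa> (curvature g) = fourier_coeff \<kappa> \<psi>"
    unfolding fourier_coeff_def[of \<kappa> "curvature g"] by (simp add: integral_unique)
  also have "\<dots> = - \<i> * \<kappa> * fourier_coeff \<kappa> \<phi>"
    using \<phi>_0 \<phi>_1 by (intro fourier_coeff_deriv iexp_total_curvature \<phi>_has_deriv continuous_on_\<psi>) auto
  finally show ?thesis .
qed

lemma norm_fourier_coeff_kds:
  "cmod (fourier_coeff \<kappa> (kds g j)) = \<bar>\<kappa>\<bar> ^ j * cmod (fourier_coeff \<kappa> (curvature g))"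
proof (induction j)
  case 0
  show ?case by (simp add: kds_0)
next
  case (Suc j)
  have "fourier_coeff \<kappa> (kds g (Suc j)) = - \<i> * \<kappa> * fourier_coeff \<kappa> (kds g j)"
    using kds_periodic[of j 0]
    by (intro fourier_coeff_deriv iexp_total_curvature kds_has_deriv[THEN has_field_derivative_at_within]
        continuous_on_kds) simp
  then show ?case
    using Suc.IH by (simp add: norm_mult)
qed

lemma norm_fourier_coeff_kds_le_energy:
  assumes "1 \<le> m"
  shows "cmod (fourier_coeff \<kappa> (kds g j)) \<le> \<bar>\<kappa>\<bar> ^ (j + 1) * energy m g"
proof -
  have "integral {0..1} (\<lambda>t. (\<psi> t)\<^sup>2) / 2 \<le> energy m g"
    using integral_square_\<psi>_le integral_square_kds_mono[OF order.refl assms] unfolding energy_def by linarith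
  then have "cmod (fourier_coeff \<kappa> (curvature g)) \<le> \<bar>\<kappa>\<bar> * energy m g"
    using norm_fourier_coeff_\<phi>_le unfolding fourier_coeff_curvature
    by (simp add: norm_mult mult_left_mono order_trans)
  then have "\<bar>\<kappa>\<bar> ^ j * cmod (fourier_coeff \<kappa> (curvature g))
      \<le> \<bar>\<kappa>\<bar> ^ j * (\<bar>\<kappa>\<bar> * energy m g)"
    by (rule mult_left_mono) simp
  then show ?thesis
    unfolding norm_fourier_coeff_kds by (simp add: mult_ac)
qed

lemma integral_square_kds_le:
  assumes "1 \<le> m"
  shows "integral {0..1} (\<lambda>s. (kds g (2*m+2) s)\<^sup>2)
    \<le> (2 + 4 * \<kappa>\<^sup>2) * integral {0..1} (\<lambda>s. (kds g (2*m+2) s + \<kappa>\<^sup>2 * kds g (2*m) s)\<^sup>2)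
      + 16 * \<kappa> ^ (4*m+6) * (energy m g)\<^sup>2"
proof -
  have "(cmod (fourier_coeff \<kappa> (kds g (2*m))))\<^sup>2 \<le> (\<bar>\<kappa>\<bar> ^ (2*m+1) * energy m g)\<^sup>2"
    using norm_fourier_coeff_kds_le_energy[OF assms, of "2*m"] by (simp add: power_mono)
  then have "16 * \<kappa>^4 * (cmod (fourier_coeff \<kappa> (kds g (2*m))))\<^sup>2
      \<le> 16 * \<kappa>^4 * (\<kappa> ^ (4*m+2) * (energy m g)\<^sup>2)"
    unfolding square_abs_power_odd_mult by (simp add: mult_left_mono)
  also have "\<dots> = 16 * \<kappa> ^ (4*m+6) * (energy m g)\<^sup>2"
  proof -
    have "4*m+6 = 4 + (4*m+2)"
      by simp
    then show ?thesis
      by (simp only: power_add mult.assoc)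
  qed
  finally have fourier_term: "16 * \<kappa>^4 * (cmod (fourier_coeff \<kappa> (kds g (2*m))))\<^sup>2
      \<le> 16 * \<kappa> ^ (4*m+6) * (energy m g)\<^sup>2" .
  have "integral {0..1} (\<lambda>s. (kds g (2*m+2) s)\<^sup>2)
    \<le> (2 + 4 * \<kappa>\<^sup>2) * integral {0..1} (\<lambda>s. (kds g (2*m+2) s + \<kappa>\<^sup>2 * kds g (2*m) s)\<^sup>2)
      + 16 * \<kappa>^4 * (cmod (fourier_coeff \<kappa> (kds g (2*m))))\<^sup>2"
    using integral_square_le_oscillator_bound[OF kds_has_deriv[of "2*m", THEN has_field_derivative_at_within]
        kds_has_deriv[THEN has_field_derivative_at_within] continuous_on_kds _ iexp_total_curvature]
      kds_periodic[of "2*m" 0]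
    by simp
  with fourier_term show ?thesis
    by linarith
qed

end

lemma closed_curve_total_curvature_turning_number:
  assumes "closed_unit_length_curve g" "turning_number g = of_int \<omega>" "\<omega> \<noteq> 0"
  shows "closed_curve_total_curvature g (2 * pi * of_int \<omega>)"
proof unfold_locales
  show "closed_unit_length_curve g"
    by (rule assms(1))
  show "integral {0..1} (curvature g) = 2 * pi * of_int \<omega>"
    using assms(2) unfolding turning_number_def by (simp add: field_simps)
  show "iexp (2 * pi * of_int \<omega>) = 1"
    using exp_integer_2pi[of "of_int \<omega>"] by (simp add: ac_simps)
  show "2 * pi * of_int \<omega> \<noteq> 0"
    using assms(3) by simp
qed

theorem mainTheorem7:
  fixes m :: nat and \<omega> :: int
  assumes "m \<ge> 1" and "\<omega> \<noteq> 0"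
  shows "\<exists>c > 0. \<exists>C > 0. \<forall>g. closed_unit_length_curve g \<and> turning_number g = real_of_int \<omega> \<longrightarrow>
    (let \<kappa> = 2 * pi * real_of_int \<omega>;
         F0 = (\<lambda>s. (-1) ^ (m + 1) * (kds g (2*m+2) s + \<kappa>^2 * kds g (2*m) s));
         P = integral {0..1} (\<lambda>s. (kds g (2*m+2) s)^2)
     in integral {0..1} (\<lambda>s. (F0 s)^2) \<ge> c * P - C * (energy m g)^2)"
proof -
  define \<kappa> where "\<kappa> = 2 * pi * real_of_int \<omega>"
  define D where "D = 2 + 4 * \<kappa>\<^sup>2"
  define C where "C = 16 * \<kappa> ^ (4*m+6)"
  have "0 < D"
    unfolding D_def by (simp add: add_pos_nonneg)
  moreover have "0 < C"
    unfolding C_def \<kappa>_def using assms(2) by (simp add: zero_less_power_eq)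
  moreover have bound: "1 / D * integral {0..1} (\<lambda>s. (kds g (2*m+2) s)\<^sup>2) - C / D * (energy m g)\<^sup>2
      \<le> integral {0..1} (\<lambda>s. ((-1) ^ (m + 1) * (kds g (2*m+2) s + \<kappa>\<^sup>2 * kds g (2*m) s))\<^sup>2)"
    if "closed_unit_length_curve g" "turning_number g = real_of_int \<omega>" for g
  proof -
    interpret closed_curve_total_curvature g \<kappa>
      unfolding \<kappa>_def using that assms(2) by (rule closed_curve_total_curvature_turning_number)
    have "integral {0..1} (\<lambda>s. (kds g (2*m+2) s)\<^sup>2)
      \<le> D * integral {0..1} (\<lambda>s. (kds g (2*m+2) s + \<kappa>\<^sup>2 * kds g (2*m) s)\<^sup>2) + C * (energy m g)\<^sup>2"
      using integral_square_kds_le[OF assms(1)] unfolding C_def D_def .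
    then show ?thesis
      unfolding square_neg_one_power_mult using \<open>0 < D\<close>
      by (simp add: diff_divide_distrib[symmetric] pos_divide_le_eq mult.commute)
  qed
  ultimately show ?thesis
    unfolding Let_def \<kappa>_def[symmetric]
    by (intro exI[of _ "1 / D"] conjI exI[of _ "C / D"] allI impI) auto
qed

end
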